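(* Let $d\ge1$ be fixed and let $f$ be a probability density on $\mathbb{R}^d$ with compact support and a unique global mode $x_0$ satisfying, for some constants $0<c_0<C_0$, $h_0>0$, $\beta>0$, $$f(x_0)-C_0\|x-x_0\|^\beta \le f(x)\le f(x_0)-c_0\|x-x_0\|^\beta \text{ for } \|x-x_0\|\le h_0,\qquad f(x)\le f(x_0)-c_0h_0^\beta \text{ for } \|x-x_0\|\ge h_0.$$ For any fixed scale multiplier $b\ge2$ and margin $\kappa\ge0$, the Multi-scale Mode Hunting procedure (described in the context) applied to an i.i.d. sample $X_1,\dots,X_n$ from $f$ runs in expected time linear in $n$.
   Context: $\|x\|=\max_i|x_i|$ is the sup-norm. Multi-scale Mode Hunting with inputs $x_1,\dots,x_n\in\mathbb{R}^d$, $b\ge2$, $\kappa\ge0$: set $s_{\max}=\lfloor \log(n)/(d\log b)\rfloor$ and initialize the active set $I_{\rm active}=\{1,\dots,n\}$. For $s=1,\dots,s_{\max}$: for each $k\in\mathbb{Z}^d$ let $I(k,s)=\{i\in I_{\rm active}: x_i\in[kb^{-s},(k+1)b^{-s})\}$ (coordinatewise half-open hypercube); let $\hat k(s)\in\arg\max_k \#I(k,s)$; update $I_{\rm active}\leftarrow\bigcup\{I(k,s):\|k-\hat k(s)\|\le\kappa\}$. Return $\hat x=\hat k(s_{\max})b^{-s_{\max}}$. Bins containing active points are found by computing $\lfloor x_i b^s\rfloor$ for each active point (time $O(d)$ per point) and accumulating counts in a sparse array. *)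

theory Defs
  imports "HOL-Probability.Probability"
begin

text \<open>Sup-norm on R^d (the type index 'd gives d = CARD('d)).\<close>
definition supn :: "real^'d \<Rightarrow> real" where
  "supn x = Max (range (\<lambda>i. \<bar>x $ i\<bar>))"

text \<open>Bin index floor(x b^s) (coordinatewise) of the half-open cube
  [k b^-s, (k+1) b^-s) containing x.\<close>
definition bin :: "real \<Rightarrow> nat \<Rightarrow> real^'d \<Rightarrow> int^'d" where
  "bin b s x = (\<chi> i. \<lfloor>x $ i * b ^ s\<rfloor>)"

definition cell_count :: "(nat \<Rightarrow> real^'d) \<Rightarrow> real \<Rightarrow> nat \<Rightarrow> nat set \<Rightarrow> int^'d \<Rightarrow> nat" where
  "cell_count X b s A k = card {i \<in> A. bin b s (X i) = k}"

definition mode_bin :: "(nat \<Rightarrow> real^'d) \<Rightarrow> real \<Rightarrow> nat \<Rightarrow> nat set \<Rightarrow> int^'d" where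
  "mode_bin X b s A = (SOME k. \<forall>k'. cell_count X b s A k' \<le> cell_count X b s A k)"

definition next_active :: "(nat \<Rightarrow> real^'d) \<Rightarrow> real \<Rightarrow> real \<Rightarrow> nat \<Rightarrow> nat set \<Rightarrow> nat set" where
  "next_active X b \<kappa> s A =
     {i \<in> A. supn (\<chi> j. real_of_int ((bin b s (X i) - mode_bin X b s A) $ j)) \<le> \<kappa>}"

text \<open>Active set after scales 1..s (s = 0: all indices 0..n-1).\<close>
fun mmh_active :: "(nat \<Rightarrow> real^'d) \<Rightarrow> nat \<Rightarrow> real \<Rightarrow> real \<Rightarrow> nat \<Rightarrow> nat set" where
  "mmh_active X n b \<kappa> 0 = {..<n}"
| "mmh_active X n b \<kappa> (Suc s) = next_active X b \<kappa> (Suc s) (mmh_active X n b \<kappa> s)"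

definition mmh_smax :: "nat \<Rightarrow> nat \<Rightarrow> real \<Rightarrow> nat" where
  "mmh_smax d n b = nat \<lfloor>ln (real n) / (real d * ln b)\<rfloor>"

definition mmh_output :: "(nat \<Rightarrow> real^'d) \<Rightarrow> nat \<Rightarrow> real \<Rightarrow> real \<Rightarrow> real^'d" where
  "mmh_output X n b \<kappa> =
     (let S = mmh_smax CARD('d) n b
      in (\<chi> i. real_of_int (mode_bin X b S (mmh_active X n b \<kappa> (S - 1)) $ i) * b powr (- real S)))"

text \<open>Running time (unit-cost model): O(n) initialization plus, at each scale s,
  O(d) work per point active at the start of scale s (bin computation, sparse
  counting, arg-max over the nonempty bins, and the update).\<close>
definition mmh_cost :: "(nat \<Rightarrow> real^'d) \<Rightarrow> nat \<Rightarrow> real \<Rightarrow> real \<Rightarrow> nat" where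
  "mmh_cost X n b \<kappa> =
     n + (\<Sum>s\<in>{1..mmh_smax CARD('d) n b}. CARD('d) * card (mmh_active X n b \<kappa> (s - 1)))"

end

theory Submission
  imports Defs
begin

(* All points of A_(s+1) lie within
   sup-distance (2 kappa + 1) b^-(s+1) of each other, so |A_(s+1)|^2 is at most the number Q of
   ordered pairs of sample points at that distance, and for a density bounded by F one has
   E Q <= n + n^2 K b^-d(s+1) with K = F (2 (2 kappa + 1))^d. The AM-GM bound |A| <= Q/t + t with
   t = n a^-(s+1), a = b^(d/2), turns this into E |A_(s+1)| <= a^(s+1) + n (K + 1) a^-(s+1), and
   both geometric series stay O(n) up to s_max, where a^s_max <= sqrt n. Only the boundedness
   f <= f x0 of the density enters. *)

lemma supn_le_iff: "supn x \<le> r \<longleftrightarrow> (\<forall>i. \<bar>x $ i\<bar> \<le> r)"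
  unfolding supn_def by (subst Max_le_iff) auto

lemma supn_zero [simp]: "supn 0 = 0"
  unfolding supn_def by simp

lemma borel_measurable_supn [measurable]: "supn \<in> borel_measurable borel"
  unfolding supn_def by (rule borel_measurable_Max) auto

lemma supn_diff_le_iff_mem_cbox:
  "supn (y - z) \<le> r \<longleftrightarrow> y \<in> cbox (z - (\<chi> i. r)) (z + (\<chi> i. r))"
  by (simp add: supn_le_iff mem_box_cart abs_le_iff) (metis add.commute diff_le_eq le_diff_eq)

lemma mmh_active_subset: "mmh_active X n b \<kappa> s \<subseteq> {..<n}"
  by (induction s) (auto simp: next_active_def)

lemma supn_diff_le_if_next_active:
  assumes "b > 0" "i \<in> next_active X b \<kappa> s A" "j \<in> next_active X b \<kappa> s A"
  shows "supn (X i - X j) \<le> (2 * \<kappa> + 1) / b ^ s"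
  unfolding supn_le_iff
proof
  fix c
  let ?k = "mode_bin X b s A $ c"
  have "\<bar>\<lfloor>X i $ c * b ^ s\<rfloor> - ?k\<bar> \<le> \<kappa>" "\<bar>\<lfloor>X j $ c * b ^ s\<rfloor> - ?k\<bar> \<le> \<kappa>"
    using assms(2,3) by (auto simp: next_active_def supn_le_iff bin_def)
  moreover have "X i $ c * b ^ s - 1 < \<lfloor>X i $ c * b ^ s\<rfloor>" "\<lfloor>X i $ c * b ^ s\<rfloor> \<le> X i $ c * b ^ s"
    "X j $ c * b ^ s - 1 < \<lfloor>X j $ c * b ^ s\<rfloor>" "\<lfloor>X j $ c * b ^ s\<rfloor> \<le> X j $ c * b ^ s"
    by linarith+
  ultimately have "\<bar>X i $ c * b ^ s - X j $ c * b ^ s\<bar> \<le> 2 * \<kappa> + 1"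
    unfolding abs_le_iff by linarith
  then have "\<bar>X i $ c - X j $ c\<bar> * b ^ s \<le> 2 * \<kappa> + 1"
    using \<open>b > 0\<close> by (simp add: abs_mult left_diff_distrib[symmetric])
  then show "\<bar>(X i - X j) $ c\<bar> \<le> (2 * \<kappa> + 1) / b ^ s"
    using \<open>b > 0\<close> by (simp add: pos_le_divide_eq)
qed

lemma mmh_cost_le:
  fixes X :: "nat \<Rightarrow> real^'d"
  shows "real (mmh_cost X n b \<kappa>) \<le> (1 + real CARD('d)) * real n
    + real CARD('d) * (\<Sum>s<mmh_smax CARD('d) n b. real (card (mmh_active X n b \<kappa> (Suc s))))"
proof -
  define S where "S = mmh_smax CARD('d) n b"
  define m where "m s = real (card (mmh_active X n b \<kappa> s))" for s
  have "real (mmh_cost X n b \<kappa>) = n + CARD('d) * (\<Sum>s<S. m s)"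
    by (simp add: mmh_cost_def sum.atLeast1_atMost_eq sum_distrib_left m_def S_def)
  also have "(\<Sum>s<S. m s) \<le> (\<Sum>s<Suc S. m s)"
    by (simp add: m_def)
  also have "\<dots> = n + (\<Sum>s<S. m (Suc s))"
    by (subst sum.lessThan_Suc_shift) (simp add: m_def)
  finally show ?thesis
    by (simp add: m_def S_def algebra_simps)
qed

lemma power_mmh_smax_le:
  assumes "b > 1" "n \<ge> 1" "d \<ge> 1"
  shows "b ^ (d * mmh_smax d n b) \<le> n"
proof -
  have "real (mmh_smax d n b) \<le> ln n / (d * ln b)"
    using assms by (simp add: mmh_smax_def)
  then have "ln (b ^ (d * mmh_smax d n b)) \<le> ln n"
    using assms by (simp add: ln_realpow pos_le_divide_eq algebra_simps)
  then show ?thesis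
    using assms by simp
qed

definition close_pairs :: "'i set \<Rightarrow> real \<Rightarrow> ('i \<Rightarrow> real^'d) \<Rightarrow> real" where
  "close_pairs I r X = (\<Sum>i\<in>I. \<Sum>j\<in>I. of_bool (supn (X i - X j) \<le> r))"

lemma card_squared_le_close_pairs:
  assumes "finite I" "A \<subseteq> I" "\<And>i j. i \<in> A \<Longrightarrow> j \<in> A \<Longrightarrow> supn (X i - X j) \<le> r"
  shows "real (card A) ^ 2 \<le> close_pairs I r X"
proof -
  have "real (card A) ^ 2 = (\<Sum>i\<in>A. \<Sum>j\<in>A. of_bool (supn (X i - X j) \<le> r))"
    using assms(3) by (simp add: power2_eq_square)
  also have "\<dots> \<le> (\<Sum>i\<in>I. \<Sum>j\<in>A. of_bool (supn (X i - X j) \<le> r))"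
    using assms(1,2) by (intro sum_mono2) (auto intro: sum_nonneg)
  also have "\<dots> \<le> close_pairs I r X"
    unfolding close_pairs_def using assms(1,2) by (intro sum_mono sum_mono2) auto
  finally show ?thesis .
qed

lemma le_divide_add_if_square_le:
  fixes x q t :: real
  assumes "0 \<le> x" "x\<^sup>2 \<le> q" "0 < t"
  shows "x \<le> q / t + t"
proof -
  have "(x - t)\<^sup>2 = x\<^sup>2 - 2 * x * t + t\<^sup>2"
    by (simp add: power2_diff)
  moreover have "0 \<le> x * t"
    using assms by simp
  ultimately have "x * t \<le> q + t\<^sup>2"
    using assms(2) zero_le_power2[of "x - t"] by linarith
  with assms(3) show ?thesis
    by (simp add: field_simps power2_eq_square)
qed

lemma card_mmh_active_Suc_le:
  assumes "b > 0" "t > 0"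
  shows "real (card (mmh_active X n b \<kappa> (Suc s)))
    \<le> close_pairs {..<n} ((2 * \<kappa> + 1) / b ^ Suc s) X / t + t"
proof (rule le_divide_add_if_square_le)
  show "(real (card (mmh_active X n b \<kappa> (Suc s))))\<^sup>2 \<le> close_pairs {..<n} ((2 * \<kappa> + 1) / b ^ Suc s) X"
    by (rule card_squared_le_close_pairs[OF finite_lessThan mmh_active_subset])
      (metis mmh_active.simps(2) supn_diff_le_if_next_active[OF \<open>b > 0\<close>])
qed (use assms in auto)

lemma mmh_cost_le_close_pairs:
  fixes X :: "nat \<Rightarrow> real^'d"
  assumes "0 < b" "\<And>s. 0 < t s"
  shows "real (mmh_cost X n b \<kappa>) \<le> (1 + real CARD('d)) * real n + real CARD('d)
    * (\<Sum>s<mmh_smax CARD('d) n b. close_pairs {..<n} ((2 * \<kappa> + 1) / b ^ Suc s) X / t s + t s)"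
proof -
  have "(\<Sum>s<mmh_smax CARD('d) n b. real (card (mmh_active X n b \<kappa> (Suc s))))
      \<le> (\<Sum>s<mmh_smax CARD('d) n b. close_pairs {..<n} ((2 * \<kappa> + 1) / b ^ Suc s) X / t s + t s)"
    using assms by (intro sum_mono card_mmh_active_Suc_le)
  with mmh_cost_le[of X n b \<kappa>] show ?thesis
    by (meson add_left_mono mult_left_mono of_nat_0_le_iff order_trans)
qed

lemma prob_space_density_lborel:
  assumes "f \<in> borel_measurable borel" "(\<integral>\<^sup>+ x. ennreal (f x) \<partial>lborel) = 1"
  shows "prob_space (density lborel (\<lambda>x. ennreal (f x)))"
  by (rule prob_spaceI) (use assms in \<open>simp add: emeasure_density\<close>)

lemma emeasure_density_supn_ball_le:
  fixes f :: "real^'d \<Rightarrow> real"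
  assumes "f \<in> borel_measurable borel" "\<And>x. f x \<le> F" "0 \<le> F" "0 \<le> r"
  shows "emeasure (density lborel (\<lambda>x. ennreal (f x))) {y. supn (y - z) \<le> r}
    \<le> ennreal (F * (2 * r) ^ CARD('d))"
proof -
  define B where "B = cbox (z - (\<chi> i. r)) (z + (\<chi> i. r))"
  have "emeasure (density lborel (\<lambda>x. ennreal (f x))) {y. supn (y - z) \<le> r}
      = (\<integral>\<^sup>+ y. ennreal (f y) * indicator B y \<partial>lborel)"
    using assms(1) by (simp add: supn_diff_le_iff_mem_cbox emeasure_density B_def)
  also have "\<dots> \<le> (\<integral>\<^sup>+ y. ennreal F * indicator B y \<partial>lborel)"
    using assms(2) by (intro nn_integral_mono) (simp add: indicator_def ennreal_leI)
  also have "\<dots> = ennreal F * emeasure lborel B"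
    by (rule nn_integral_cmult_indicator) (simp add: B_def)
  also have "emeasure lborel B = ennreal ((2 * r) ^ CARD('d))"
  proof -
    have "\<forall>e\<in>Basis. (z - (\<chi> i. r)) \<bullet> e \<le> (z + (\<chi> i. r)) \<bullet> e
        \<and> (z + (\<chi> i. r) - (z - (\<chi> i. r))) \<bullet> e = 2 * r"
      using assms(4) by (auto simp: Basis_vec_def inner_axis)
    then show ?thesis
      by (simp add: B_def emeasure_lborel_cbox_eq cong: prod.cong)
  qed
  finally show ?thesis
    using assms(3,4) by (simp add: ennreal_mult)
qed

lemma borel_measurable_supn_diff_PiM:
  fixes M :: "(real^'d) measure"
  assumes "sets M = sets borel" "i \<in> I" "j \<in> I"
  shows "(\<lambda>X. supn (X i - X j)) \<in> borel_measurable (PiM I (\<lambda>_. M))"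
proof -
  have component: "(\<lambda>X. X k) \<in> borel_measurable (PiM I (\<lambda>_. M))" if "k \<in> I" for k
    using measurable_component_singleton[OF that, of "\<lambda>_. M"]
    by (simp add: measurable_cong_sets[OF refl assms(1)])
  show ?thesis
    using borel_measurable_diff[OF component[OF assms(2)] component[OF assms(3)]]
    by (rule measurable_compose[OF _ borel_measurable_supn])
qed

lemma emeasure_PiM_supn_diff_le:
  fixes M :: "(real^'d) measure"
  assumes M: "prob_space M" "sets M = sets borel"
    and I: "finite I" "i \<in> I" "j \<in> I" "i \<noteq> j"
    and ball: "\<And>z. emeasure M {y. supn (y - z) \<le> r} \<le> c"
  shows "emeasure (PiM I (\<lambda>_. M)) {X \<in> space (PiM I (\<lambda>_. M)). supn (X i - X j) \<le> r} \<le> c"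
proof -
  interpret product_sigma_finite "\<lambda>_. M"
    using M(1) by (simp add: product_sigma_finite_def prob_space_imp_sigma_finite)
  interpret P: prob_space "PiM (I - {i}) (\<lambda>_. M)"
    using M(1) by (rule prob_space_PiM)
  define E where "E = {X. supn (X i - X j :: real^'d) \<le> r}"
  have I_eq: "insert i (I - {i}) = I"
    using I by auto
  have [measurable]: "(\<lambda>X. supn (X i - X j)) \<in> borel_measurable (PiM I (\<lambda>_. M))"
    by (rule borel_measurable_supn_diff_PiM[OF M(2) I(2,3)])
  have E_space: "E \<inter> space (PiM I (\<lambda>_. M)) = {X \<in> space (PiM I (\<lambda>_. M)). supn (X i - X j) \<le> r}"
    by (auto simp: E_def)
  have E_sets: "E \<inter> space (PiM I (\<lambda>_. M)) \<in> sets (PiM I (\<lambda>_. M))"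
    unfolding E_space by measurable
  have "emeasure (PiM I (\<lambda>_. M)) {X \<in> space (PiM I (\<lambda>_. M)). supn (X i - X j) \<le> r}
      = (\<integral>\<^sup>+ X. indicator E X \<partial>PiM (insert i (I - {i})) (\<lambda>_. M))"
    unfolding I_eq nn_integral_indicator'[OF E_sets] E_space ..
  also have "\<dots> = (\<integral>\<^sup>+ x. \<integral>\<^sup>+ y. indicator E (x(i := y)) \<partial>M \<partial>PiM (I - {i}) (\<lambda>_. M))"
    using I E_sets
    by (intro product_nn_integral_insert) (auto simp: insert_absorb borel_measurable_indicator_iff)
  also have "\<dots> = (\<integral>\<^sup>+ x. emeasure M {y. supn (y - x j) \<le> r} \<partial>PiM (I - {i}) (\<lambda>_. M))"
  proof (intro nn_integral_cong)
    fix x :: "_ \<Rightarrow> real^'d"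
    have "{y. supn (y - x j) \<le> r} \<in> sets M"
      unfolding M(2) supn_diff_le_iff_mem_cbox by (simp add: borel_closed)
    moreover have "indicator E (x(i := y)) = (indicator {y. supn (y - x j) \<le> r} y :: ennreal)" for y
      using I(4) by (simp add: E_def indicator_def)
    ultimately show "(\<integral>\<^sup>+ y. indicator E (x(i := y)) \<partial>M) = emeasure M {y. supn (y - x j) \<le> r}"
      by simp
  qed
  also have "\<dots> \<le> (\<integral>\<^sup>+ x. c \<partial>PiM (I - {i}) (\<lambda>_. M))"
    using ball by (intro nn_integral_mono) auto
  also have "\<dots> = c"
    by (simp add: P.emeasure_space_1)
  finally show ?thesis .
qed

lemma integrable_of_bool_supn_diff_le:
  fixes M :: "(real^'d) measure"
  assumes "prob_space M" "sets M = sets borel" "i \<in> I" "j \<in> I"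
  shows "integrable (PiM I (\<lambda>_. M)) (\<lambda>X. of_bool (supn (X i - X j) \<le> r) :: real)"
proof -
  interpret P: prob_space "PiM I (\<lambda>_. M)"
    using assms(1) by (rule prob_space_PiM)
  show ?thesis
    using borel_measurable_supn_diff_PiM[OF assms(2-4)]
    by (intro P.integrable_const_bound[where B = 1]) auto
qed

lemma integrable_close_pairs:
  fixes M :: "(real^'d) measure"
  assumes "prob_space M" "sets M = sets borel"
  shows "integrable (PiM I (\<lambda>_. M)) (close_pairs I r)"
  unfolding close_pairs_def using integrable_of_bool_supn_diff_le[OF assms, where I = I and r = r]
  by (intro Bochner_Integration.integrable_sum) auto

lemma integral_close_pairs_le:
  fixes M :: "(real^'d) measure" and r c :: real
  assumes M: "prob_space M" "sets M = sets borel"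
    and "finite I" "0 \<le> r" "0 \<le> c"
    and ball: "\<And>z. emeasure M {y. supn (y - z) \<le> r} \<le> ennreal c"
  shows "(\<integral>X. close_pairs I r X \<partial>PiM I (\<lambda>_. M)) \<le> card I + (card I)\<^sup>2 * c"
proof -
  interpret P: prob_space "PiM I (\<lambda>_. M)"
    using M(1) by (rule prob_space_PiM)
  have pair: "(\<integral>X. of_bool (supn (X i - X j) \<le> r) \<partial>PiM I (\<lambda>_. M)) \<le> of_bool (i = j) + c"
    if "i \<in> I" "j \<in> I" for i j
  proof (cases "i = j")
    case True
    then show ?thesis
      using \<open>0 \<le> r\<close> \<open>0 \<le> c\<close> by (simp add: P.prob_space)
  next
    case False
    let ?A = "{X \<in> space (PiM I (\<lambda>_. M)). supn (X i - X j) \<le> r}"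
    have "(\<integral>X. of_bool (supn (X i - X j) \<le> r) \<partial>PiM I (\<lambda>_. M))
        = (\<integral>X. indicator ?A X \<partial>PiM I (\<lambda>_. M))"
      by (rule Bochner_Integration.integral_cong) (auto simp: indicator_def)
    also have "\<dots> = measure (PiM I (\<lambda>_. M)) ?A"
      by (simp add: Int_absorb2)
    also have "\<dots> \<le> c"
      using emeasure_PiM_supn_diff_le[OF M \<open>finite I\<close> that False ball] \<open>0 \<le> c\<close>
      by (simp add: P.emeasure_eq_measure)
    finally show ?thesis
      using False by simp
  qed
  have "(\<integral>X. close_pairs I r X \<partial>PiM I (\<lambda>_. M))
      = (\<Sum>i\<in>I. \<Sum>j\<in>I. \<integral>X. of_bool (supn (X i - X j) \<le> r) \<partial>PiM I (\<lambda>_. M))"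
    unfolding close_pairs_def using integrable_of_bool_supn_diff_le[OF M, where I = I and r = r]
    by (simp add: Bochner_Integration.integrable_sum Bochner_Integration.integral_sum)
  also have "\<dots> \<le> (\<Sum>i\<in>I. \<Sum>j\<in>I. of_bool (i = j) + c)"
    using pair by (intro sum_mono) auto
  also have "\<dots> = card I + (card I)\<^sup>2 * c"
    using \<open>finite I\<close> by (simp add: sum.distrib power2_eq_square algebra_simps)
  finally show ?thesis .
qed

lemma integral_close_pairs_density_le:
  fixes f :: "real^'d \<Rightarrow> real" and r :: real
  assumes "prob_space (density lborel (\<lambda>x. ennreal (f x)))"
    and "f \<in> borel_measurable borel" "\<And>x. f x \<le> F" "0 \<le> F" "0 \<le> r" "finite I"
  shows "(\<integral>X. close_pairs I r X \<partial>PiM I (\<lambda>_. density lborel (\<lambda>x. ennreal (f x))))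
    \<le> card I + (card I)\<^sup>2 * (F * (2 * r) ^ CARD('d))"
  using assms(4,5)
  by (intro integral_close_pairs_le[OF assms(1) _ assms(6,5) _ emeasure_density_supn_ball_le[OF assms(2-5)]])
    auto

lemma integral_close_pairs_scale_le:
  fixes f :: "real^'d \<Rightarrow> real" and F b \<kappa> :: real and n :: nat
  assumes "prob_space (density lborel (\<lambda>x. ennreal (f x)))"
    and "f \<in> borel_measurable borel" "\<And>x. f x \<le> F" "0 \<le> F" "0 < b" "0 \<le> \<kappa>"
  shows "(\<integral>X. close_pairs {..<n} ((2 * \<kappa> + 1) / b ^ s) X
      \<partial>PiM {..<n} (\<lambda>_. density lborel (\<lambda>x. ennreal (f x))))
    \<le> real n + (real n)\<^sup>2 * (F * (2 * (2 * \<kappa> + 1)) ^ CARD('d) / b ^ (CARD('d) * s))"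
proof -
  have "(2 * ((2 * \<kappa> + 1) / b ^ s)) ^ CARD('d) = (2 * (2 * \<kappa> + 1)) ^ CARD('d) / b ^ (CARD('d) * s)"
    by (simp add: power_divide power_mult mult.commute[of "CARD('d)"])
  then show ?thesis
    using integral_close_pairs_density_le[OF assms(1-4), of "(2 * \<kappa> + 1) / b ^ s" "{..<n}"] assms(5,6)
    by simp
qed

lemma nn_integral_le_of_integrable_majorant:
  fixes h g :: "'a \<Rightarrow> real"
  assumes "integrable M g" "\<And>x. 0 \<le> h x" "\<And>x. h x \<le> g x" "(\<integral>x. g x \<partial>M) \<le> B"
  shows "(\<integral>\<^sup>+ x. ennreal (h x) \<partial>M) \<le> ennreal B"
proof -
  have "(\<integral>\<^sup>+ x. ennreal (h x) \<partial>M) \<le> (\<integral>\<^sup>+ x. ennreal (g x) \<partial>M)"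
    using assms(3) by (intro nn_integral_mono ennreal_leI)
  also have "\<dots> = ennreal (\<integral>x. g x \<partial>M)"
    using assms(1-3) by (intro nn_integral_eq_integral) (auto intro: order_trans)
  also have "\<dots> \<le> ennreal B"
    using assms(4) by (rule ennreal_leI)
  finally show ?thesis .
qed

lemma sum_power_Suc_add_divide_le:
  fixes a m :: real
  assumes "1 < a" "0 \<le> m"
  shows "(\<Sum>s<S. a ^ Suc s + m / a ^ Suc s) \<le> (a ^ Suc S + m) / (a - 1)"
proof -
  have "(\<Sum>s<S. a ^ Suc s) = a * (a ^ S - 1) / (a - 1)"
    using assms(1) by (simp add: sum_distrib_left[symmetric] sum_gp_strict field_simps)
  also have "\<dots> \<le> a ^ Suc S / (a - 1)"
    using assms(1) by (intro divide_right_mono) auto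
  finally have powers: "(\<Sum>s<S. a ^ Suc s) \<le> a ^ Suc S / (a - 1)" .
  have "(\<Sum>s<S. 1 / a ^ Suc s) = 1 / a * (\<Sum>s<S. (1 / a) ^ s)"
    by (simp add: sum_distrib_left power_one_over)
  also have "\<dots> = 1 / a * ((1 - (1 / a) ^ S) / (1 - 1 / a))"
    using assms(1) by (simp add: sum_gp_strict)
  also have "\<dots> = (1 - (1 / a) ^ S) / (a - 1)"
    using assms(1) by (simp add: field_simps)
  also have "\<dots> \<le> 1 / (a - 1)"
    using assms(1) by (intro divide_right_mono) auto
  finally have inverses: "(\<Sum>s<S. 1 / a ^ Suc s) \<le> 1 / (a - 1)" .
  have "(\<Sum>s<S. a ^ Suc s + m / a ^ Suc s) = (\<Sum>s<S. a ^ Suc s) + m * (\<Sum>s<S. 1 / a ^ Suc s)"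
    by (simp add: sum.distrib sum_distrib_left)
  also have "\<dots> \<le> a ^ Suc S / (a - 1) + m * (1 / (a - 1))"
    using powers inverses assms(2) by (intro add_mono mult_left_mono) auto
  finally show ?thesis
    by (simp add: add_divide_distrib)
qed

lemma nn_integral_mmh_cost_le:
  fixes f :: "real^'d \<Rightarrow> real" and F b \<kappa> :: real
  defines "M \<equiv> density lborel (\<lambda>x. ennreal (f x))"
    and "d \<equiv> CARD('d)"
    and "a \<equiv> sqrt (b ^ CARD('d))"
    and "K \<equiv> F * (2 * (2 * \<kappa> + 1)) ^ CARD('d)"
  assumes M: "prob_space M" and f: "f \<in> borel_measurable borel" "\<And>x. f x \<le> F" "0 \<le> F"
    and "1 < b" "0 \<le> \<kappa>" "1 \<le> n"
  shows "(\<integral>\<^sup>+ X. ennreal (real (mmh_cost X n b \<kappa>)) \<partial>PiM {..<n} (\<lambda>_. M))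
    \<le> ennreal ((1 + d) * n + d * (\<Sum>s<mmh_smax d n b. a ^ Suc s + n * (K + 1) / a ^ Suc s))"
proof -
  define P where "P = PiM {..<n} (\<lambda>_. M)"
  define r where "r s = (2 * \<kappa> + 1) / b ^ Suc s" for s
  define t where "t s = n / a ^ Suc s" for s
  define Q where "Q s X = close_pairs {..<n} (r s) X" for s and X :: "nat \<Rightarrow> real^'d"
  \<comment> \<open>mode_bin is chosen by SOME, so the cost need not be measurable: integrate the majorant g.\<close>
  define g where "g X = (1 + real d) * n + d * (\<Sum>s<mmh_smax d n b. Q s X / t s + t s)"
    for X :: "nat \<Rightarrow> real^'d"
  interpret P: prob_space P
    unfolding P_def using M by (rule prob_space_PiM)
  have a: "1 < a" "a\<^sup>2 = b ^ d"
    using \<open>1 < b\<close> by (auto simp: a_def d_def)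
  have t: "0 < t s" for s
    using a \<open>1 \<le> n\<close> by (simp add: t_def)
  have integrable: "integrable P (Q s)" for s
    unfolding P_def Q_def using M by (rule integrable_close_pairs) (simp add: M_def)
  have "(\<integral>X. Q s X \<partial>P) / t s + t s \<le> a ^ Suc s + n * (K + 1) / a ^ Suc s" for s
  proof -
    have "b ^ (d * Suc s) = (a ^ Suc s)\<^sup>2"
      by (metis a(2) power_mult mult.commute)
    then have "(\<integral>X. Q s X \<partial>P) \<le> n + n\<^sup>2 * (K / (a ^ Suc s)\<^sup>2)"
      using integral_close_pairs_scale_le[OF M[unfolded M_def] f, of b \<kappa> n "Suc s"] \<open>1 < b\<close> \<open>0 \<le> \<kappa>\<close>
      by (simp add: P_def Q_def r_def M_def K_def d_def)
    then have "(\<integral>X. Q s X \<partial>P) / t s + t s \<le> (n + n\<^sup>2 * (K / (a ^ Suc s)\<^sup>2)) / t s + t s"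
      using t[of s] by (intro add_right_mono divide_right_mono) auto
    also have "\<dots> = a ^ Suc s + n * (K + 1) / a ^ Suc s"
      using a \<open>1 \<le> n\<close> by (simp add: t_def field_simps power2_eq_square)
    finally show ?thesis .
  qed
  then have "(\<integral>X. g X \<partial>P)
      \<le> (1 + real d) * n + d * (\<Sum>s<mmh_smax d n b. a ^ Suc s + n * (K + 1) / a ^ Suc s)"
    unfolding g_def using integrable
    by (simp add: Bochner_Integration.integral_sum integrable_sum P.prob_space)
      (auto intro!: mult_left_mono sum_mono)
  moreover have "integrable P g"
    unfolding g_def using integrable
    by (intro Bochner_Integration.integrable_add Bochner_Integration.integrable_sum
        integrable_mult_right integrable_divide P.integrable_const) auto
  moreover have "real (mmh_cost X n b \<kappa>) \<le> g X" for X
    unfolding g_def Q_def r_def d_def using \<open>1 < b\<close> t by (intro mmh_cost_le_close_pairs) auto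
  ultimately show ?thesis
    unfolding P_def[symmetric] by (intro nn_integral_le_of_integrable_majorant) auto
qed

lemma mmh_expected_cost_linear:
  fixes f :: "real^'d \<Rightarrow> real" and F b \<kappa> :: real
  assumes M: "prob_space (density lborel (\<lambda>x. ennreal (f x)))"
    and f: "f \<in> borel_measurable borel" "\<And>x. f x \<le> F" "0 \<le> F"
    and "1 < b" "0 \<le> \<kappa>"
  shows "\<exists>C. \<forall>n\<ge>1. (\<integral>\<^sup>+ X. ennreal (real (mmh_cost X n b \<kappa>))
      \<partial>PiM {..<n} (\<lambda>_. density lborel (\<lambda>x. ennreal (f x)))) \<le> ennreal (C * real n)"
proof -
  define d where "d = CARD('d)"
  define a where "a = sqrt (b ^ d)"
  define K where "K = F * (2 * (2 * \<kappa> + 1)) ^ d"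
  have a: "1 < a" "a\<^sup>2 = b ^ d"
    using \<open>1 < b\<close> by (auto simp: a_def d_def)
  have "0 \<le> K"
    using \<open>0 \<le> F\<close> \<open>0 \<le> \<kappa>\<close> by (simp add: K_def)
  show ?thesis
  proof (intro exI allI impI)
    fix n :: nat
    assume "1 \<le> n"
    define S where "S = mmh_smax d n b"
    have "a ^ S \<le> (a ^ S)\<^sup>2"
      using a by (simp add: power2_eq_square)
    also have "\<dots> = b ^ (d * S)"
      by (metis a(2) power_mult mult.commute)
    also have "\<dots> \<le> n"
      unfolding S_def using \<open>1 < b\<close> \<open>1 \<le> n\<close> by (rule power_mmh_smax_le) (simp add: d_def)
    finally have "a ^ S \<le> n" .
    have "(\<Sum>s<S. a ^ Suc s + n * (K + 1) / a ^ Suc s) \<le> (a ^ Suc S + n * (K + 1)) / (a - 1)"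
      using a \<open>0 \<le> K\<close> by (intro sum_power_Suc_add_divide_le) auto
    also have "\<dots> \<le> (a * n + n * (K + 1)) / (a - 1)"
      using a \<open>a ^ S \<le> n\<close> by (intro divide_right_mono add_right_mono) auto
    finally have "(1 + real d) * n + d * (\<Sum>s<S. a ^ Suc s + n * (K + 1) / a ^ Suc s)
        \<le> (1 + real d) * n + d * ((a * n + n * (K + 1)) / (a - 1))"
      by (intro add_left_mono mult_left_mono) auto
    also have "\<dots> = (1 + d + d * (a + K + 1) / (a - 1)) * n"
      using a by (simp add: field_simps)
    finally have "(1 + real d) * n + d * (\<Sum>s<S. a ^ Suc s + n * (K + 1) / a ^ Suc s)
        \<le> (1 + d + d * (a + K + 1) / (a - 1)) * n" .
    then show "(\<integral>\<^sup>+ X. ennreal (real (mmh_cost X n b \<kappa>))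
        \<partial>PiM {..<n} (\<lambda>_. density lborel (\<lambda>x. ennreal (f x))))
      \<le> ennreal ((1 + d + d * (a + K + 1) / (a - 1)) * real n)"
      using nn_integral_mmh_cost_le[OF M f \<open>1 < b\<close> \<open>0 \<le> \<kappa>\<close> \<open>1 \<le> n\<close>]
      unfolding S_def a_def K_def d_def by (meson ennreal_leI order_trans)
  qed
qed

theorem proposition1:
  fixes f :: "real^'d \<Rightarrow> real" and x0 :: "real^'d"
    and c0 C0 h0 \<beta> b \<kappa> :: real
  assumes f_meas: "f \<in> borel_measurable borel"
    and f_nonneg: "\<forall>x. 0 \<le> f x"
    and f_int: "(\<integral>\<^sup>+ x. ennreal (f x) \<partial>lborel) = 1"
    and f_supp: "compact (closure {x. f x \<noteq> 0})"
    and c0: "0 < c0" and c0C0: "c0 < C0" and h0: "0 < h0" and beta: "0 < \<beta>"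
    and mode: "\<forall>x. f x \<le> f x0" and mode_unique: "\<forall>x. x \<noteq> x0 \<longrightarrow> f x < f x0"
    and near: "\<forall>x. supn (x - x0) \<le> h0 \<longrightarrow>
                 f x0 - C0 * supn (x - x0) powr \<beta> \<le> f x \<and> f x \<le> f x0 - c0 * supn (x - x0) powr \<beta>"
    and far: "\<forall>x. supn (x - x0) \<ge> h0 \<longrightarrow> f x \<le> f x0 - c0 * h0 powr \<beta>"
    and b: "b \<ge> 2" and kappa: "\<kappa> \<ge> 0"
  shows "\<exists>C. \<forall>n\<ge>1.
    (\<integral>\<^sup>+ X. ennreal (real (mmh_cost X n b \<kappa>))
        \<partial>(PiM {..<n} (\<lambda>_. density lborel (\<lambda>x. ennreal (f x)))))
      \<le> ennreal (C * real n)"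
proof (rule mmh_expected_cost_linear)
  show "prob_space (density lborel (\<lambda>x. ennreal (f x)))"
    using f_meas f_int by (rule prob_space_density_lborel)
  show "\<And>x. f x \<le> f x0" "0 \<le> f x0" "1 < b"
    using mode f_nonneg b by auto
qed (use f_meas kappa in auto)

end
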